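(* Let $n,d$ be positive integers with $d\mid 2n^2$ and $2n^2>d^2$, and let $(a,b,c)=\left(2n+d,\ \tfrac{2n^2}{d}+2n,\ \tfrac{2n^2}{d}+2n+d\right)$ (a DPT). If there exists a prime $p>2$ such that $e_p(d)$ is odd, then $\gcd(a,b,c)>1$, i.e. $(a,b,c)$ is reducible.
   Context: A Diophantine Pythagorean Triangle (DPT) is a triple $(a,b,c)$ of positive integers with $a<b<c$ and $a^2+b^2=c^2$. For a prime $p$, $e_p(d)$ denotes the exponent of $p$ in the prime factorization of $d$. *)

theory Defs
  imports "HOL-Computational_Algebra.Primes"
begin

end

theory Submission
  imports Defs
begin

text \<open>
  Write \<open>k = 2n\<^sup>2/d\<close>, so that \<open>d k = 2n\<^sup>2\<close> and \<open>(a, b, c) = (2n + d, k + 2n, k + 2n + d)\<close>.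
  For an odd prime \<open>p\<close> the exponent \<open>e\<^sub>p(2n\<^sup>2) = 2 e\<^sub>p(n)\<close> is even, so if \<open>e\<^sub>p(d)\<close> is odd
  then so is \<open>e\<^sub>p(k)\<close>. Hence \<open>p\<close> divides \<open>d\<close>, \<open>k\<close> and (being a prime divisor of \<open>2n\<^sup>2\<close>
  other than 2) also \<open>n\<close>, and therefore all of \<open>a, b, c\<close>.
\<close>

lemma prime_dvd_if_odd_multiplicity:
  fixes p x :: nat
  assumes "odd (multiplicity p x)"
  shows "p dvd x"
  using assms not_dvd_imp_multiplicity_0 by fastforce

lemma even_multiplicity_mult_square:
  fixes p c n :: nat
  assumes "prime p" "\<not> p dvd c" "n > 0"
  shows "even (multiplicity p (c * n^2))"
proof -
  have "c > 0" using assms(2) by (cases "c = 0") simp_all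
  then have "multiplicity p (c * n^2) = multiplicity p c + 2 * multiplicity p n"
    using assms by (simp add: prime_elem_multiplicity_mult_distrib
                              prime_elem_multiplicity_power_distrib)
  then show ?thesis
    using assms(2) by (simp add: not_dvd_imp_multiplicity_0)
qed

lemma odd_multiplicity_cofactor:
  fixes p a b :: nat
  assumes "prime p" "a > 0" "b > 0"
    and "even (multiplicity p (a * b))" "odd (multiplicity p a)"
  shows "odd (multiplicity p b)"
proof -
  have "multiplicity p (a * b) = multiplicity p a + multiplicity p b"
    using assms(1-3) by (simp add: prime_elem_multiplicity_mult_distrib)
  then show ?thesis using assms(4,5) by simp
qed

lemma odd_prime_dvd_double_square:
  fixes p n :: nat
  assumes "prime p" "p > 2" "p dvd 2 * n^2"
  shows "p dvd n"
proof -
  have "\<not> p dvd 2" using assms(2) by (auto dest: dvd_imp_le)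
  then have "p dvd n^2" using assms(1,3) by (simp add: prime_dvd_mult_iff)
  then show ?thesis using assms(1) prime_dvd_power by blast
qed

theorem lemma6:
  fixes n d :: nat
  assumes "n > 0" and "d > 0"
    and "d dvd 2 * n^2"
    and "2 * n^2 > d^2"
    and "\<exists>p::nat. prime p \<and> p > 2 \<and> odd (multiplicity p d)"
  shows "gcd (2*n + d) (gcd (2*n^2 div d + 2*n) (2*n^2 div d + 2*n + d)) > 1"
proof -
  obtain p :: nat where p: "prime p" "p > 2" "odd (multiplicity p d)"
    using assms(5) by blast
  define k where "k = 2*n^2 div d"
  have dk: "d * k = 2*n^2" using assms(3) k_def by simp
  have "k > 0" using dk assms(1) by (cases "k = 0") simp_all
  have "\<not> p dvd 2" using p(2) by (auto dest: dvd_imp_le)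
  then have "even (multiplicity p (d * k))"
    using dk even_multiplicity_mult_square[OF p(1) _ assms(1)] by simp
  then have "odd (multiplicity p k)"
    using odd_multiplicity_cofactor p(1,3) assms(2) \<open>k > 0\<close> by blast
  then have pk: "p dvd k" by (rule prime_dvd_if_odd_multiplicity)
  have pd: "p dvd d" using p(3) by (rule prime_dvd_if_odd_multiplicity)
  then have pn: "p dvd n"
    using dk odd_prime_dvd_double_square[OF p(1,2)] by (metis dvd_mult2)
  have "p dvd gcd (2*n + d) (gcd (k + 2*n) (k + 2*n + d))"
    using pd pk pn by simp
  then have "p \<le> gcd (2*n + d) (gcd (k + 2*n) (k + 2*n + d))"
    using assms(2) by (simp add: dvd_imp_le)
  then show ?thesis using p(2) k_def by simp
qed

end
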